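(* Let $\psi^{(0)}\in\mathbb{R}$ and $\psi^{(1)}\in\mathbb{R}^2$ be realizable, i.e. $\psi^{(0)}>0$ and $|\psi^{(1)}|\le \psi^{(0)}$, and let $\psi^{(2)}=\psi^{(2)}(\psi^{(0)},\psi^{(1)})$ be given by the $M_1$ closure. Let $\nu\in\mathbb{R}^2$ be an arbitrary unit vector. Then for each choice of sign, the pair $\bigl(\psi^{(0)}\pm \psi^{(1)}\cdot\nu,\ \psi^{(1)}\pm \psi^{(2)}\nu\bigr)$ is realizable.
   Context: Moments of an angular flux $\psi\ge 0$ (a non-negative density or measure, Dirac masses allowed) on the unit sphere are $\psi^{(0)}=\int\psi\,d\Omega$, $\psi^{(1)}=\int\Omega\psi\,d\Omega$, $\psi^{(2)}=\int\Omega\Omega^T\psi\,d\Omega$. A pair $(\psi^{(0)},\psi^{(1)})$ is called realizable if it is the zeroth and first moment of a non-negative density; this holds iff $\psi^{(0)}>0$ and $|\psi^{(1)}|\le\psi^{(0)}$. The $M_1$ closure (entropy closure for photons) is $\psi^{(2)}=D(\psi^{(1)}/\psi^{(0)})\,\psi^{(0)}$ with $D(n)=\frac{1-\chi(|n|)}{2}\mathrm{id}+\frac{3\chi(|n|)-1}{2}\frac{nn^T}{|n|^2}$ and Eddington factor $\chi(f)=\frac{3+4f^2}{5+2\sqrt{4-3f^2}}$ for $f\in[0,1]$; $\psi^{(2)}$ is the second moment of a non-negative density realizing $(\psi^{(0)},\psi^{(1)})$ (the entropy minimizer). Here the problem is two-dimensional: $\psi^{(1)}\in\mathbb{R}^2$,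 $\psi^{(2)}$ is a $2\times2$ matrix. *)

theory Defs
  imports "HOL-Analysis.Analysis"
begin

definition eddington :: "real \<Rightarrow> real" where
  "eddington f = (3 + 4 * f\<^sup>2) / (5 + 2 * sqrt (4 - 3 * f\<^sup>2))"

definition outer :: "real^2 \<Rightarrow> real^2 \<Rightarrow> real^2^2" where
  "outer u v = (\<chi> i j. u $ i * v $ j)"

text \<open>Closure matrix D(n). For n = 0 the second term is n n^T / |n|^2 with
  division by zero yielding 0; its coefficient (3 chi(0) - 1)/2 vanishes anyway.\<close>
definition M1_D :: "real^2 \<Rightarrow> real^2^2" where
  "M1_D n = ((1 - eddington (norm n)) / 2) *\<^sub>R mat 1
          + ((3 * eddington (norm n) - 1) / 2 / (norm n)\<^sup>2) *\<^sub>R outer n n"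

definition M1_psi2 :: "real \<Rightarrow> real^2 \<Rightarrow> real^2^2" where
  "M1_psi2 psi0 psi1 = psi0 *\<^sub>R M1_D ((1 / psi0) *\<^sub>R psi1)"

definition realizable :: "real \<Rightarrow> real^2 \<Rightarrow> bool" where
  "realizable psi0 psi1 \<longleftrightarrow> psi0 > 0 \<and> norm psi1 \<le> psi0"

text \<open>Realizability as "moments of some non-negative measure" (the zero measure
  allowed): psi0 >= 0 and |psi1| <= psi0.\<close>
definition realizable_meas :: "real \<Rightarrow> real^2 \<Rightarrow> bool" where
  "realizable_meas psi0 psi1 \<longleftrightarrow> psi0 \<ge> 0 \<and> norm psi1 \<le> psi0"

end

theory Submission
  imports Defs
begin

text \<open>Dividing by psi0 and replacing nu by s nu reduces the claim to
  |p + D(p) nu| \<le> 1 + p \<bullet> nu for |p| \<le> 1 and a unit vector nu.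
  With f = |p| and r = sqrt (4 - 3 f^2) \<in> [1, 2] the Eddington factor is (5 - 2 r) / 3,
  so D(p) nu = (r - 1)/3 nu + (2 - r) (p \<bullet> nu) / f^2 p. Writing t = p \<bullet> nu, the defect
  f^2 ((1 + t)^2 - |p + D(p) nu|^2) is then the non-negative square
  2/3 (r - 1) (2 - r) (t + (2 + r)/3)^2.\<close>

lemma outer_mult_vec: "outer u v *v w = (v \<bullet> w) *\<^sub>R (u :: real^2)"
  unfolding outer_def
  by (simp add: vec_eq_iff matrix_vector_mult_def inner_vec_def sum_distrib_left mult_ac)

lemma M1_D_mult_vec:
  "M1_D p *v v = ((1 - eddington (norm p)) / 2) *\<^sub>R v
     + ((3 * eddington (norm p) - 1) / 2 * (p \<bullet> v) / (norm p)\<^sup>2) *\<^sub>R p"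
  unfolding M1_D_def matrix_vector_mult_add_rdistrib scaleR_matrix_vector_assoc[symmetric]
    outer_mult_vec by simp

lemma M1_D_scaleR_vec: "M1_D p *v (c *\<^sub>R v) = c *\<^sub>R (M1_D p *v v)"
  by (simp add: M1_D_mult_vec algebra_simps)

lemma eddington_eq_sqrt:
  assumes "3 * f\<^sup>2 \<le> 4"
  shows "eddington f = (5 - 2 * sqrt (4 - 3 * f\<^sup>2)) / 3"
proof -
  define r where "r = sqrt (4 - 3 * f\<^sup>2)"
  have "r \<ge> 0" and "r\<^sup>2 = 4 - 3 * f\<^sup>2"
    using assms by (simp_all add: r_def)
  then have "3 * (3 + 4 * f\<^sup>2) = (5 - 2 * r) * (5 + 2 * r)" and "5 + 2 * r > 0"
    by (simp_all add: algebra_simps power2_eq_square)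
  then show ?thesis
    unfolding eddington_def r_def[symmetric] by (simp add: field_simps)
qed

lemma M1_D_mult_vec_sqrt:
  assumes "norm p \<le> 1"
  defines "r \<equiv> sqrt (4 - 3 * (norm p)\<^sup>2)"
  shows "M1_D p *v v = ((r - 1) / 3) *\<^sub>R v + ((2 - r) * (p \<bullet> v) / (norm p)\<^sup>2) *\<^sub>R p"
proof -
  have "3 * (norm p)\<^sup>2 \<le> 4"
    using assms(1) power_le_one[of "norm p" 2] by simp
  then have chi: "eddington (norm p) = (5 - 2 * r) / 3"
    unfolding r_def by (rule eddington_eq_sqrt)
  have "(1 - (5 - 2 * r) / 3) / 2 = (r - 1) / 3" and "(3 * ((5 - 2 * r) / 3) - 1) / 2 = 2 - r"
    by (simp_all add: field_simps)
  then show ?thesis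
    unfolding M1_D_mult_vec chi by (simp only:)
qed

lemma M1_flux_defect_eq_square:
  fixes r t f2 :: real
  assumes "3 * f2 = 4 - r\<^sup>2"
  shows "f2 * (1 + t)\<^sup>2
      - ((f2 + (2 - r) * t)\<^sup>2 + 2 * (f2 + (2 - r) * t) * ((r - 1) / 3) * t + ((r - 1) / 3)\<^sup>2 * f2)
    = 2 / 3 * (r - 1) * (2 - r) * (t + (2 + r) / 3)\<^sup>2"
proof -
  have f2: "f2 = (4 - r\<^sup>2) / 3" using assms by simp
  show ?thesis
    unfolding f2 by (simp add: power2_eq_square divide_simps; algebra)
qed

lemma norm_add_M1_D_mult_le:
  fixes p nu :: "real^2"
  assumes p: "norm p \<le> 1" and nu: "norm nu = 1"
  shows "norm (p + M1_D p *v nu) \<le> 1 + p \<bullet> nu"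
proof -
  define f r t where "f = norm p" and "r = sqrt (4 - 3 * f\<^sup>2)" and "t = p \<bullet> nu"
  have "f\<^sup>2 \<le> 1"
    using p power_le_one[of f 2] by (simp add: f_def)
  then have r_sq: "3 * f\<^sup>2 = 4 - r\<^sup>2" and "1 \<le> r"
    unfolding r_def by (simp_all add: real_le_rsqrt)
  have "r \<le> sqrt 4"
    unfolding r_def by (rule real_sqrt_le_mono) simp
  then have "r \<le> 2" by simp
  have "\<bar>t\<bar> \<le> f"
    using Cauchy_Schwarz_ineq2[of p nu] nu by (simp add: t_def f_def)
  then have t_ge: "0 \<le> 1 + t"
    using p by (simp add: f_def)
  define a c where "a = (r - 1) / 3" and "c = 1 + (2 - r) * t / f\<^sup>2"
  have w_eq: "p + M1_D p *v nu = c *\<^sub>R p + a *\<^sub>R nu"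
    unfolding M1_D_mult_vec_sqrt[OF p] by (simp add: a_def c_def f_def r_def t_def algebra_simps)
  show ?thesis
  proof (cases "p = 0")
    case True
    then show ?thesis
      using w_eq nu by (simp add: a_def r_def f_def t_def)
  next
    case False
    then have f_pos: "f\<^sup>2 > 0" by (simp add: f_def)
    have "p \<bullet> p = f\<^sup>2" and "nu \<bullet> nu = 1"
      using nu by (simp_all add: f_def power2_norm_eq_inner norm_eq_1)
    then have "(norm (p + M1_D p *v nu))\<^sup>2 = c\<^sup>2 * f\<^sup>2 + 2 * c * a * t + a\<^sup>2"
      unfolding w_eq power2_norm_eq_inner t_def
      by (simp add: inner_add_left inner_add_right inner_commute[of nu p] algebra_simps
          power2_eq_square)
    then have "f\<^sup>2 * (norm (p + M1_D p *v nu))\<^sup>2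
        = (c * f\<^sup>2)\<^sup>2 + 2 * (c * f\<^sup>2) * a * t + a\<^sup>2 * f\<^sup>2"
      by (simp add: power2_eq_square algebra_simps)
    also have "c * f\<^sup>2 = f\<^sup>2 + (2 - r) * t"
      using f_pos by (simp add: c_def field_simps)
    also have "(f\<^sup>2 + (2 - r) * t)\<^sup>2 + 2 * (f\<^sup>2 + (2 - r) * t) * a * t + a\<^sup>2 * f\<^sup>2
        = f\<^sup>2 * (1 + t)\<^sup>2 - 2 / 3 * (r - 1) * (2 - r) * (t + (2 + r) / 3)\<^sup>2"
      using M1_flux_defect_eq_square[OF r_sq, of t] by (simp add: a_def)
    also have "\<dots> \<le> f\<^sup>2 * (1 + t)\<^sup>2"
      using \<open>1 \<le> r\<close> \<open>r \<le> 2\<close> by simp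
    finally have "(norm (p + M1_D p *v nu))\<^sup>2 \<le> (1 + t)\<^sup>2"
      using f_pos by (simp only: mult_le_cancel_left_pos)
    then show ?thesis
      using t_ge unfolding t_def by (rule power2_le_imp_le)
  qed
qed

theorem lemma1:
  fixes psi0 :: real and psi1 nu :: "real^2" and s :: real
  assumes "realizable psi0 psi1"
    and "norm nu = 1"
    and "s = 1 \<or> s = -1"
  shows "realizable_meas (psi0 + s * (psi1 \<bullet> nu))
                         (psi1 + s *\<^sub>R (M1_psi2 psi0 psi1 *v nu))"
proof -
  have psi0: "psi0 > 0" and "norm psi1 \<le> psi0"
    using assms(1) by (auto simp: realizable_def)
  define p where "p = (1 / psi0) *\<^sub>R psi1"
  have psi1: "psi1 = psi0 *\<^sub>R p" and "norm p \<le> 1"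
    using psi0 \<open>norm psi1 \<le> psi0\<close> by (simp_all add: p_def divide_simps)
  have "norm (s *\<^sub>R nu) = 1"
    using assms(2,3) by auto
  from norm_add_M1_D_mult_le[OF \<open>norm p \<le> 1\<close> this]
  have bound: "norm (p + s *\<^sub>R (M1_D p *v nu)) \<le> 1 + s * (p \<bullet> nu)"
    by (simp add: M1_D_scaleR_vec)
  have flux: "psi1 + s *\<^sub>R (M1_psi2 psi0 psi1 *v nu) = psi0 *\<^sub>R (p + s *\<^sub>R (M1_D p *v nu))"
    unfolding M1_psi2_def p_def[symmetric] scaleR_matrix_vector_assoc[symmetric]
    by (simp add: psi1 algebra_simps)
  have density: "psi0 + s * (psi1 \<bullet> nu) = psi0 * (1 + s * (p \<bullet> nu))"
    by (simp add: psi1 algebra_simps)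
  have "0 \<le> 1 + s * (p \<bullet> nu)"
    using norm_ge_zero bound by (rule order_trans)
  then show ?thesis
    unfolding realizable_meas_def flux density
    using psi0 bound by (simp add: mult_left_mono)
qed

end
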